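(* Let $\mathcal{G}=(N,\mathcal{W})$ be an SVG, let $i\neq j$ be players with $j$ a YES-blocker of $\mathcal{G}$, and let $\hat{\mathcal{G}}=\mathcal{G}^{j\to i}$. Let $S\subseteq N\setminus\{i,j\}$ satisfy $S\cup\{i,j\}\notin\mathcal{W}$. Then $$\hat\alpha^-_i(S)\le \alpha^-_i(S)+\alpha^-_j(S),$$ where $\alpha^-$ denotes NO-efficacy scores of the Recursive Measure in $\mathcal{G}$, and $\hat\alpha^-$ denotes the same in $\hat{\mathcal{G}}$.
   Context: A simple voting game (SVG) is a pair $\mathcal{G}=(N,\mathcal{W})$ with $N$ a nonempty finite set of players and $\mathcal{W}\subseteq 2^N$ monotone, $\emptyset\notin\mathcal{W}$, $N\in\mathcal{W}$. Divisions are identified with their YES-sets $S\subseteq N$; $S$ is winning iff $S\in\mathcal{W}$. Decisiveness and success: - Player $k$ is YES-decisive in $S$ if $k\in S\in\mathcal{W}$ and $S\setminus\{k\}\notin\mathcal{W}$. - Player $k$ is NO-decisive in $S$ if $k\notin S\notin\mathcal{W}$ and $S\cup\{k\}\in\mathcal{W}$. - Player $k$ is successful in $S$ if ($k\in S\in\mathcal{W}$) or ($k\notin S\notin\mathcal{W}$). Loyal children: if $S\in\mathcal{W}$, they are the sets $S\setminus\{m\}\in\mathcal{W}$ with $m\in S$. If $S\notin\mathcal{W}$, they are the sets $S\cup\{m\}\notin\mathcal{W}$ with $m\notin S$. Recursive efficacy score $\alpha_k(S)$: - $\alpha_k(S)=1$ if $k$ is YES- or NO-decisive in $S$; - $\alpha_k(S)=0$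 if $k$ is not successful; - otherwise, the average of $\alpha_k$ over the loyal children of $S$. The NO-efficacy score is $\alpha^-_k(S)=\alpha_k(S)$ if $k\notin S$ and $0$ if $k\in S$. Blockers: $j$ is a YES-blocker if $j\in S$ for all $S\in\mathcal{W}$. Donation game: $\mathcal{G}^{j\to i}$ is the SVG on $N$ in which, for $S\subseteq N\setminus\{i,j\}$: - $S\cup\{i,j\}$ and $S\cup\{i\}$ are winning iff $S\cup\{i,j\}\in\mathcal{W}$; - $S\cup\{j\}$ and $S$ are winning iff $S\in\mathcal{W}$. *)

theory Defs
  imports Complex_Main
begin

definition svg :: "'a set \<Rightarrow> 'a set set \<Rightarrow> bool" where
  "svg N W \<longleftrightarrow> finite N \<and> N \<noteq> {} \<and> W \<subseteq> Pow N \<and>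
     (\<forall>S T. S \<in> W \<and> S \<subseteq> T \<and> T \<subseteq> N \<longrightarrow> T \<in> W) \<and>
     {} \<notin> W \<and> N \<in> W"

definition yes_decisive :: "'a set set \<Rightarrow> 'a \<Rightarrow> 'a set \<Rightarrow> bool" where
  "yes_decisive W k S \<longleftrightarrow> k \<in> S \<and> S \<in> W \<and> S - {k} \<notin> W"

definition no_decisive :: "'a set set \<Rightarrow> 'a \<Rightarrow> 'a set \<Rightarrow> bool" where
  "no_decisive W k S \<longleftrightarrow> k \<notin> S \<and> S \<notin> W \<and> insert k S \<in> W"

definition successful :: "'a set set \<Rightarrow> 'a \<Rightarrow> 'a set \<Rightarrow> bool" where
  "successful W k S \<longleftrightarrow> (k \<in> S \<and> S \<in> W) \<or> (k \<notin> S \<and> S \<notin> W)"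

definition loyal_children :: "'a set \<Rightarrow> 'a set set \<Rightarrow> 'a set \<Rightarrow> 'a set set" where
  "loyal_children N W S =
     (if S \<in> W then {S - {m} | m. m \<in> S \<and> S - {m} \<in> W}
      else {insert m S | m. m \<in> N - S \<and> insert m S \<notin> W})"

text \<open>Along loyal children of a winning set the cardinality strictly decreases, and along
  loyal children of a losing set the cardinality strictly increases (within N), so
  fuel card N + 1 always suffices; see alpha below.\<close>
fun alpha_fuel :: "nat \<Rightarrow> 'a set \<Rightarrow> 'a set set \<Rightarrow> 'a \<Rightarrow> 'a set \<Rightarrow> real" where
  "alpha_fuel 0 N W k S = 0"
| "alpha_fuel (Suc n) N W k S =
     (if yes_decisive W k S \<or> no_decisive W k S then 1
      else if \<not> successful W k S then 0
      else (\<Sum>C\<in>loyal_children N W S. alpha_fuel n N W k C) / real (card (loyal_children N W S)))"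

definition alpha :: "'a set \<Rightarrow> 'a set set \<Rightarrow> 'a \<Rightarrow> 'a set \<Rightarrow> real" where
  "alpha N W k S = alpha_fuel (Suc (card N)) N W k S"

definition alpha_no :: "'a set \<Rightarrow> 'a set set \<Rightarrow> 'a \<Rightarrow> 'a set \<Rightarrow> real" where
  "alpha_no N W k S = (if k \<notin> S then alpha N W k S else 0)"

definition yes_blocker :: "'a set set \<Rightarrow> 'a \<Rightarrow> bool" where
  "yes_blocker W j \<longleftrightarrow> (\<forall>S \<in> W. j \<in> S)"

definition donation :: "'a set \<Rightarrow> 'a set set \<Rightarrow> 'a \<Rightarrow> 'a \<Rightarrow> 'a set set" where
  "donation N W j i =
     {T. T \<subseteq> N \<and> (if i \<in> T then (T - {i, j}) \<union> {i, j} \<in> W else T - {i, j} \<in> W)}"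

end

theory Submission
  imports Defs
begin

text \<open>Because j is a YES-blocker, the winning sets of the donation game are the sets T that
  contain i with insert j T winning, and every set avoiding i or j is losing. At a losing set the
  Recursive Measure is a zero-or-one value or the average over the losing one-player extensions,
  so both sides can be unfolded at U avoiding i and j: the donation score of i averages over all
  extensions insert m U, the scores of i and j over the extensions with m \<notin> {i, j} together with
  insert j U resp. insert i U. The extensions with m \<notin> {i, j} are compared by induction on
  card (N - U); for insert j U a second induction bounds the donation score of i at insert j V by
  the scores of i at insert j V and of j at insert i V.\<close>

definition losing_extensions :: "'a set \<Rightarrow> 'a set set \<Rightarrow> 'a set \<Rightarrow> 'a set" where
  "losing_extensions N W S = {m \<in> N - S. insert m S \<notin> W}"

lemma alpha_fuel_losing_stable:
  assumes "finite N"
  shows "S \<subseteq> N \<Longrightarrow> S \<notin> W \<Longrightarrow> card (N - S) < n \<Longrightarrow> card (N - S) < n'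
    \<Longrightarrow> alpha_fuel n N W k S = alpha_fuel n' N W k S"
proof (induction n arbitrary: S n')
  case 0
  then show ?case by simp
next
  case (Suc n)
  then obtain n'' where n': "n' = Suc n''" by (cases n') auto
  have children: "loyal_children N W S = {insert m S | m. m \<in> N - S \<and> insert m S \<notin> W}"
    using Suc.prems by (simp add: loyal_children_def)
  have "(\<Sum>C\<in>loyal_children N W S. alpha_fuel n N W k C) =
        (\<Sum>C\<in>loyal_children N W S. alpha_fuel n'' N W k C)"
  proof (rule sum.cong)
    fix C
    assume "C \<in> loyal_children N W S"
    then obtain m where C: "C = insert m S" "m \<in> N - S" "insert m S \<notin> W"
      using children by auto
    have "N - C \<subset> N - S" using C by auto
    then have "card (N - C) < card (N - S)"
      using \<open>finite N\<close> by (meson finite_Diff psubset_card_mono)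
    then show "alpha_fuel n N W k C = alpha_fuel n'' N W k C"
      using Suc.IH[of C n''] Suc.prems C n' by auto
  qed simp
  then show ?case using n' by simp
qed

lemma alpha_losing:
  assumes "finite N" "S \<subseteq> N" "S \<notin> W"
  shows "alpha N W k S =
    (if k \<in> S then 0 else if insert k S \<in> W then 1 else
      (\<Sum>m\<in>losing_extensions N W S. alpha N W k (insert m S)) / real (card (losing_extensions N W S)))"
proof -
  let ?A = "losing_extensions N W S"
  have children: "loyal_children N W S = (\<lambda>m. insert m S) ` ?A"
    using assms by (auto simp: loyal_children_def losing_extensions_def)
  have inj: "inj_on (\<lambda>m. insert m S) ?A"
    by (rule inj_onI) (auto simp: losing_extensions_def)
  have stable: "alpha_fuel (card N) N W k (insert m S) = alpha N W k (insert m S)" if "m \<in> ?A" for m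
  proof -
    have "card (N - insert m S) < card N"
      using that \<open>finite N\<close> by (intro psubset_card_mono) (auto simp: losing_extensions_def)
    then show ?thesis
      unfolding alpha_def
      using alpha_fuel_losing_stable[OF \<open>finite N\<close>, of "insert m S" W "card N" "Suc (card N)" k]
        that assms
      by (auto simp: losing_extensions_def)
  qed
  have "alpha N W k S = (if no_decisive W k S then 1 else if \<not> successful W k S then 0 else
     (\<Sum>C\<in>loyal_children N W S. alpha_fuel (card N) N W k C) / real (card (loyal_children N W S)))"
    unfolding alpha_def using assms by (simp add: yes_decisive_def)
  also have "\<dots> = (if k \<in> S then 0 else if insert k S \<in> W then 1 else
     (\<Sum>m\<in>?A. alpha N W k (insert m S)) / real (card ?A))"
    unfolding children using assms inj stable
    by (simp add: no_decisive_def successful_def sum.reindex card_image)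
  finally show ?thesis .
qed

lemma alpha_fuel_bounds: "0 \<le> alpha_fuel n N W k S \<and> alpha_fuel n N W k S \<le> 1"
proof (induction n arbitrary: S)
  case 0
  then show ?case by simp
next
  case (Suc n)
  let ?L = "loyal_children N W S"
  have "(\<Sum>C\<in>?L. alpha_fuel n N W k C) \<le> real (card ?L)"
    using sum_bounded_above[of ?L "alpha_fuel n N W k" 1] Suc.IH by simp
  then have "(\<Sum>C\<in>?L. alpha_fuel n N W k C) / real (card ?L) \<le> 1"
    by (cases "card ?L = 0") (auto simp: divide_le_eq)
  moreover have "0 \<le> (\<Sum>C\<in>?L. alpha_fuel n N W k C)"
    using Suc.IH by (simp add: sum_nonneg)
  ultimately show ?case by auto
qed

lemma alpha_nonneg: "0 \<le> alpha N W k S"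
  unfolding alpha_def using alpha_fuel_bounds by (rule conjunct1)

lemma alpha_le_one: "alpha N W k S \<le> 1"
  unfolding alpha_def using alpha_fuel_bounds by (rule conjunct2)

lemma alpha_losing_no_decisive:
  assumes "finite N" "S \<subseteq> N" "S \<notin> W" "k \<notin> S" "insert k S \<in> W"
  shows "alpha N W k S = 1"
  using alpha_losing[OF assms(1-3)] assms(4,5) by simp

lemma alpha_losing_member:
  assumes "finite N" "S \<subseteq> N" "S \<notin> W" "k \<in> S"
  shows "alpha N W k S = 0"
  using alpha_losing[OF assms(1-3)] assms(4) by simp

text \<open>The child in which k itself joins is losing and contains k, so it contributes 0.\<close>
lemma alpha_losing_average:
  assumes "finite N" "S \<subseteq> N" "S \<notin> W"
    and "losing_extensions N W S = insert k A" "k \<notin> A"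
  shows "alpha N W k S = (\<Sum>m\<in>A. alpha N W k (insert m S)) / (real (card A) + 1)"
proof -
  have k: "k \<in> N" "k \<notin> S" "insert k S \<notin> W"
    using assms(4) by (auto simp: losing_extensions_def)
  have "finite A"
    using assms(1,4) finite_subset[of "losing_extensions N W S" N]
    by (auto simp: losing_extensions_def)
  moreover have "alpha N W k (insert k S) = 0"
    using k assms(1,2) by (intro alpha_losing_member) auto
  ultimately show ?thesis
    using alpha_losing[OF assms(1-3)] k assms(4,5) by simp
qed

lemma alpha_losing_average_pair:
  assumes "finite N" "S \<subseteq> N" "S \<notin> W"
    and "losing_extensions N W S = insert k (insert l A)" "k \<notin> A" "l \<notin> A" "k \<noteq> l"
  shows "alpha N W k S
    = (alpha N W k (insert l S) + (\<Sum>m\<in>A. alpha N W k (insert m S))) / (real (card A) + 2)"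
proof -
  have "finite (insert l A)"
    using assms(1,4) finite_subset[of "losing_extensions N W S" N]
    by (auto simp: losing_extensions_def)
  then show ?thesis
    using alpha_losing_average[OF assms(1-4)] assms(5-7) by (simp add: add.commute)
qed

lemma sum_div_card_Suc_le:
  fixes f g h :: "'b \<Rightarrow> real"
  assumes "finite B" "A \<subseteq> B"
    and "\<And>m. m \<in> A \<Longrightarrow> f m \<le> h m + g m" "\<And>m. m \<in> B - A \<Longrightarrow> f m \<le> g m"
    and "\<And>m. m \<in> A \<Longrightarrow> 0 \<le> h m"
  shows "sum f B / (real (card B) + 1) \<le> sum h A / (real (card A) + 1) + sum g B / (real (card B) + 1)"
proof -
  have "sum f B = sum f A + sum f (B - A)"
    using assms(1,2) by (simp add: sum.subset_diff)
  also have "\<dots> \<le> sum (\<lambda>m. h m + g m) A + sum g (B - A)"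
    using assms(3,4) by (intro add_mono sum_mono) auto
  also have "\<dots> = sum h A + sum g B"
    using assms(1,2) by (simp add: sum.distrib sum.subset_diff)
  finally have "sum f B / (real (card B) + 1) \<le> (sum h A + sum g B) / (real (card B) + 1)"
    by (intro divide_right_mono) auto
  moreover have "sum h A / (real (card B) + 1) \<le> sum h A / (real (card A) + 1)"
    using card_mono[OF assms(1,2)] assms(5) by (intro divide_left_mono sum_nonneg) auto
  ultimately show ?thesis by (simp add: add_divide_distrib)
qed

lemma svg_finite: "svg N W \<Longrightarrow> finite N"
  by (simp add: svg_def)

lemma svg_upward_closed: "svg N W \<Longrightarrow> S \<in> W \<Longrightarrow> S \<subseteq> T \<Longrightarrow> T \<subseteq> N \<Longrightarrow> T \<in> W"
  unfolding svg_def by blast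

context
  fixes N :: "'a set" and W :: "'a set set" and i j :: 'a
  assumes svg: "svg N W" and i: "i \<in> N" and j: "j \<in> N" and ij: "i \<noteq> j"
    and blocker: "yes_blocker W j"
begin

lemma losing_without_blocker: "j \<notin> S \<Longrightarrow> S \<notin> W"
  using blocker by (auto simp: yes_blocker_def)

lemma donation_iff: "T \<subseteq> N \<Longrightarrow> T \<in> donation N W j i \<longleftrightarrow> i \<in> T \<and> insert j T \<in> W"
proof -
  assume "T \<subseteq> N"
  moreover have "T - {i, j} \<notin> W" by (rule losing_without_blocker) auto
  moreover have "i \<in> T \<Longrightarrow> (T - {i, j}) \<union> {i, j} = insert j T" by auto
  ultimately show ?thesis unfolding donation_def by auto
qed

lemma alpha_blocker_no_decisive:
  assumes "S \<subseteq> N" "j \<notin> S" "insert j S \<in> W"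
  shows "alpha N W j S = 1"
  using svg_finite[OF svg] assms losing_without_blocker by (intro alpha_losing_no_decisive) auto

lemma alpha_donation_pair_winning:
  assumes "U \<subseteq> N - {i, j}" "insert i (insert j U) \<in> W"
  shows "alpha N (donation N W j i) i U = 1"
  using svg_finite[OF svg] assms i donation_iff[of U] donation_iff[of "insert i U"]
  by (intro alpha_losing_no_decisive) (auto simp: insert_commute)

lemma alpha_donation_insert_blocker_average:
  assumes "V \<subseteq> N - {i, j}" "insert i (insert j V) \<notin> W"
  shows "alpha N (donation N W j i) i (insert j V)
    = (\<Sum>m\<in>N - V - {i, j}. alpha N (donation N W j i) i (insert m (insert j V)))
      / (real (card (N - V - {i, j})) + 1)"
proof (rule alpha_losing_average)
  have "V \<subseteq> N" using assms(1) by auto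
  then show "losing_extensions N (donation N W j i) (insert j V) = insert i (N - V - {i, j})"
    using assms i j ij by (auto simp: losing_extensions_def donation_iff insert_commute)
qed (use svg_finite[OF svg] assms j ij donation_iff[of "insert j V"] in auto)

lemma alpha_donation_average:
  assumes "U \<subseteq> N - {i, j}" "insert i (insert j U) \<notin> W"
  shows "alpha N (donation N W j i) i U
    = (alpha N (donation N W j i) i (insert j U)
        + (\<Sum>m\<in>N - U - {i, j}. alpha N (donation N W j i) i (insert m U)))
      / (real (card (N - U - {i, j})) + 2)"
proof (rule alpha_losing_average_pair)
  have "U \<subseteq> N" using assms(1) by auto
  then show "losing_extensions N (donation N W j i) U = insert i (insert j (N - U - {i, j}))"
    using assms i j ij by (auto simp: losing_extensions_def donation_iff insert_commute)
qed (use svg_finite[OF svg] assms ij donation_iff[of U] in auto)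

text \<open>The donation score of i at insert j V averages over all children insert m (insert j V)
  with m \<notin> {i, j}, the score of i only over the losing ones; at each winning one, j is
  NO-decisive at insert m (insert i V), so the matching term in the average of j is 1.\<close>
lemma alpha_donation_insert_blocker_le:
  "V \<subseteq> N - {i, j} \<Longrightarrow> alpha N (donation N W j i) i (insert j V)
     \<le> alpha N W i (insert j V) + alpha N W j (insert i V)"
proof (induction "card (N - V)" arbitrary: V rule: less_induct)
  case less
  have V: "V \<subseteq> N" "i \<notin> V" "j \<notin> V" using less.prems by auto
  have fin: "finite N" using svg by (rule svg_finite)
  have iV_losing: "insert i V \<notin> W" using V ij by (intro losing_without_blocker) auto
  let ?W' = "donation N W j i"
  show ?case
  proof (cases "insert i (insert j V) \<in> W")
    case True
    then have "alpha N W j (insert i V) = 1"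
      using V i ij by (intro alpha_blocker_no_decisive) (auto simp: insert_commute)
    then show ?thesis
      using alpha_le_one[of N ?W' i "insert j V"] alpha_nonneg[of N W i "insert j V"] by simp
  next
    case False
    define M where "M = N - V - {i, j}"
    define M0 where "M0 = {m \<in> M. insert m (insert j V) \<notin> W}"
    have "finite M" "M0 \<subseteq> M" "i \<notin> M" "j \<notin> M" using fin by (auto simp: M_def M0_def)
    have jV_losing: "insert j V \<notin> W"
      using False svg_upward_closed[OF svg, of "insert j V" "insert i (insert j V)"] i j V by auto
    define f where "f m = alpha N ?W' i (insert m (insert j V))" for m
    define h where "h m = alpha N W i (insert m (insert j V))" for m
    define g where "g m = alpha N W j (insert m (insert i V))" for m
    have "alpha N W i (insert j V) = sum h M0 / (real (card M0) + 1)"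
      unfolding h_def
    proof (rule alpha_losing_average)
      show "losing_extensions N W (insert j V) = insert i M0"
        using False i V ij by (auto simp: losing_extensions_def M_def M0_def)
    qed (use fin V j jV_losing \<open>i \<notin> M\<close> \<open>M0 \<subseteq> M\<close> in auto)
    moreover have "alpha N W j (insert i V) = sum g M / (real (card M) + 1)"
      unfolding g_def
    proof (rule alpha_losing_average)
      show "losing_extensions N W (insert i V) = insert j M"
        using False j V ij losing_without_blocker
        by (auto simp: losing_extensions_def M_def insert_commute)
    qed (use fin V i iV_losing \<open>j \<notin> M\<close> in auto)
    moreover have "sum f M / (real (card M) + 1)
        \<le> sum h M0 / (real (card M0) + 1) + sum g M / (real (card M) + 1)"
    proof (rule sum_div_card_Suc_le)
      fix m
      assume "m \<in> M0"
      then have m: "m \<in> N - V - {i, j}" by (auto simp: M_def M0_def)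
      then have "card (N - insert m V) < card (N - V)"
        using fin by (intro psubset_card_mono) auto
      then show "f m \<le> h m + g m"
        using less.hyps[of "insert m V"] less.prems m by (simp add: f_def g_def h_def insert_commute)
    next
      fix m
      assume "m \<in> M - M0"
      then have m: "m \<in> N - V - {i, j}" and winning: "insert m (insert j V) \<in> W"
        by (auto simp: M_def M0_def)
      have "insert j (insert m (insert i V)) \<in> W"
        by (rule svg_upward_closed[OF svg winning]) (use i j V m in auto)
      then have "g m = 1"
        unfolding g_def using m i V ij by (intro alpha_blocker_no_decisive) auto
      then show "f m \<le> g m" using alpha_le_one f_def by simp
    qed (use \<open>finite M\<close> \<open>M0 \<subseteq> M\<close> alpha_nonneg h_def in auto)
    ultimately show ?thesis
      using alpha_donation_insert_blocker_average[OF less.prems False] by (simp add: f_def M_def)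
  qed
qed

lemma alpha_donation_scaled_le:
  assumes U: "U \<subseteq> N - {i, j}" and jU_losing: "insert j U \<notin> W"
  shows "(real (card (N - U - {i, j})) + 2) * alpha N (donation N W j i) i U
    \<le> alpha N W i (insert j U) + alpha N W j (insert i U)
      + (\<Sum>m\<in>N - U - {i, j}. alpha N (donation N W j i) i (insert m U))"
proof (cases "insert i (insert j U) \<in> W")
  case True
  have "alpha N W i (insert j U) = 1"
    using svg_finite[OF svg] U i j True jU_losing by (intro alpha_losing_no_decisive) auto
  moreover have "alpha N W j (insert i U) = 1"
    using U i ij True by (intro alpha_blocker_no_decisive) (auto simp: insert_commute)
  moreover have "alpha N (donation N W j i) i (insert m U) = 1" if "m \<in> N - U - {i, j}" for m
  proof (rule alpha_donation_pair_winning)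
    show "insert i (insert j (insert m U)) \<in> W"
      by (rule svg_upward_closed[OF svg True]) (use that i j U in auto)
  qed (use that U in auto)
  ultimately show ?thesis using alpha_donation_pair_winning[OF U True] by simp
next
  case False
  then show ?thesis
    using alpha_donation_average[OF U False] alpha_donation_insert_blocker_le[OF U]
    by (simp add: insert_commute)
qed

lemma alpha_donation_le:
  "U \<subseteq> N - {i, j} \<Longrightarrow> alpha N (donation N W j i) i U \<le> alpha N W i U + alpha N W j U"
proof (induction "card (N - U)" arbitrary: U rule: less_induct)
  case less
  have U: "U \<subseteq> N" "i \<notin> U" "j \<notin> U" using less.prems by auto
  have fin: "finite N" using svg by (rule svg_finite)
  have U_losing: "U \<notin> W" using U losing_without_blocker by auto
  let ?W' = "donation N W j i"
  show ?case
  proof (cases "insert j U \<in> W")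
    case True
    then have "alpha N W j U = 1" using U by (intro alpha_blocker_no_decisive) auto
    then show ?thesis using alpha_le_one[of N ?W' i U] alpha_nonneg[of N W i U] by simp
  next
    case jU_losing: False
    define M where "M = N - U - {i, j}"
    have "i \<notin> M" "j \<notin> M" by (auto simp: M_def)
    define fi where "fi m = alpha N W i (insert m U)" for m
    define fj where "fj m = alpha N W j (insert m U)" for m
    define f where "f m = alpha N ?W' i (insert m U)" for m
    have extensions: "losing_extensions N W U = insert i (insert j M)"
      using jU_losing i j U ij losing_without_blocker by (auto simp: losing_extensions_def M_def)
    have "alpha N W i U = (fi j + sum fi M) / (real (card M) + 2)"
      using alpha_losing_average_pair[OF fin U(1) U_losing extensions] \<open>i \<notin> M\<close> \<open>j \<notin> M\<close> ij
      by (simp add: fi_def)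
    moreover have "alpha N W j U = (fj i + sum fj M) / (real (card M) + 2)"
      using alpha_losing_average_pair[OF fin U(1) U_losing, of j i M] extensions \<open>i \<notin> M\<close> \<open>j \<notin> M\<close> ij
      by (simp add: fj_def insert_commute)
    moreover have "(real (card M) + 2) * alpha N ?W' i U \<le> fi j + fj i + sum f M"
      using alpha_donation_scaled_le[OF less.prems jU_losing] by (simp add: M_def fi_def fj_def f_def)
    moreover have "f m \<le> fi m + fj m" if "m \<in> M" for m
    proof -
      have m: "m \<in> N - U - {i, j}" using that by (simp add: M_def)
      then have "card (N - insert m U) < card (N - U)"
        using fin by (intro psubset_card_mono) auto
      then show ?thesis using less.hyps[of "insert m U"] less.prems m by (simp add: f_def fi_def fj_def)
    qed
    then have "sum f M \<le> sum fi M + sum fj M"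
      by (simp add: sum.distrib[symmetric] sum_mono)
    ultimately have "(real (card M) + 2) * alpha N ?W' i U
        \<le> (real (card M) + 2) * (alpha N W i U + alpha N W j U)"
      by (simp add: field_simps)
    then show ?thesis by (simp add: mult_le_cancel_left_pos add_pos_nonneg)
  qed
qed

end

theorem claim1:
  fixes N :: "'a set" and W :: "'a set set" and i j :: 'a and S :: "'a set"
  assumes "svg N W"
    and "i \<in> N" and "j \<in> N" and "i \<noteq> j"
    and "yes_blocker W j"
    and "S \<subseteq> N - {i, j}"
    and "S \<union> {i, j} \<notin> W"
  shows "alpha_no N (donation N W j i) i S \<le> alpha_no N W i S + alpha_no N W j S"
  using alpha_donation_le[OF assms(1-6)] assms(6) by (auto simp: alpha_no_def)

end
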